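(* Let $\lambda\in\mathbb{R}\setminus\{0\}$, $k\in\mathbb{Z}$, $u\in\mathbb{C}$ with $u\neq1$, and $x_1,x_2,y\in\mathbb{R}$. Then for every integer $n\ge0$, \[ FG_{n,\lambda}^{[k,c]}(x_1+x_2,y;u)=\sum_{m=0}^{n}\binom{n}{m}\sum_{r=0}^{m}S_{2,\lambda}^{(x_1)}(m,r)\,(x_2)_r\,FG_{n-m,\lambda}^{[k,c]}(0,y;u) \] and \[ FG_{n,\lambda}^{[k,s]}(x_1+x_2,y;u)=\sum_{m=0}^{n}\binom{n}{m}\sum_{r=0}^{m}S_{2,\lambda}^{(x_1)}(m,r)\,(x_2)_r\,FG_{n-m,\lambda}^{[k,s]}(0,y;u). \]
   Context: All generating functions are formal power series in $t$. For $z\in\mathbb{C}$: $(z)_{0,\lambda}=1$ and $(z)_{n,\lambda}=z(z-\lambda)\cdots(z-(n-1)\lambda)$ for $n\ge1$; $(z)_0=1$ and $(z)_r=z(z-1)\cdots(z-r+1)$ is the ordinary falling factorial. The degenerate exponential is $e_\lambda^{z}(t)=\sum_{n\ge0}(z)_{n,\lambda}\frac{t^n}{n!}$ (i.e. $(1+\lambda t)^{z/\lambda}$), and $e_\lambda(t)=e_\lambda^{1}(t)$. Also $\log_\lambda(1+t)=\frac{1}{\lambda}\big((1+t)^\lambda-1\big)$. The degenerate $\lambda$-Stirling polynomials of the second kind are defined by $\frac{(e_\lambda(t)-1)^r}{r!}e_\lambda^{x}(t)=\sum_{n\ge r}S_{2,\lambda}^{(x)}(n,r)\frac{t^n}{n!}$.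 The modified degenerate polyexponential function is $\mathrm{Ei}_{k,\lambda}(x)=\sum_{n\ge1}\frac{(1)_{n,\lambda}}{n^k(n-1)!}x^n$. The degenerate cosine and sine are $\cos_\lambda^{(y)}(t)=\frac{e_\lambda^{iy}(t)+e_\lambda^{-iy}(t)}{2}$ and $\sin_\lambda^{(y)}(t)=\frac{e_\lambda^{iy}(t)-e_\lambda^{-iy}(t)}{2i}$. The cosine and sine degenerate poly-Frobenius-Genocchi polynomials are defined by $\sum_{n\ge0}FG_{n,\lambda}^{[k,c]}(x,y;u)\frac{t^n}{n!}=\frac{(1-u)\mathrm{Ei}_{k,\lambda}(\log_\lambda(1+t))}{e_\lambda(t)-u}e_\lambda^{x}(t)\cos_\lambda^{(y)}(t)$ and $\sum_{n\ge0}FG_{n,\lambda}^{[k,s]}(x,y;u)\frac{t^n}{n!}=\frac{(1-u)\mathrm{Ei}_{k,\lambda}(\log_\lambda(1+t))}{e_\lambda(t)-u}e_\lambda^{x}(t)\sin_\lambda^{(y)}(t)$. *)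

theory Defs
  imports Complex_Main "HOL-Computational_Algebra.Formal_Power_Series"
begin

definition falling_fact :: "'a::comm_ring_1 \<Rightarrow> nat \<Rightarrow> 'a" where
  "falling_fact z r = (\<Prod>i<r. z - of_nat i)"

definition dfall :: "complex \<Rightarrow> real \<Rightarrow> nat \<Rightarrow> complex" where
  "dfall z lam n = (\<Prod>i<n. z - of_nat i * complex_of_real lam)"

definition dexp :: "real \<Rightarrow> complex \<Rightarrow> complex fps" where
  "dexp lam z = Abs_fps (\<lambda>n. dfall z lam n / fact n)"

definition dlog1p :: "real \<Rightarrow> complex fps" where
  "dlog1p lam = fps_const (1 / complex_of_real lam) * (fps_binomial (complex_of_real lam) - 1)"

definition dEi :: "int \<Rightarrow> real \<Rightarrow> complex fps" where
  "dEi k lam = Abs_fps (\<lambda>n. if n = 0 then 0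
      else dfall 1 lam n / ((of_nat n) powi k * fact (n - 1)))"

definition dcos :: "real \<Rightarrow> real \<Rightarrow> complex fps" where
  "dcos lam y = fps_const (1/2) * (dexp lam (\<i> * of_real y) + dexp lam (- \<i> * of_real y))"

definition dsin :: "real \<Rightarrow> real \<Rightarrow> complex fps" where
  "dsin lam y = fps_const (1 / (2 * \<i>)) * (dexp lam (\<i> * of_real y) - dexp lam (- \<i> * of_real y))"

definition dStirling2 :: "real \<Rightarrow> real \<Rightarrow> nat \<Rightarrow> nat \<Rightarrow> complex" where
  "dStirling2 lam x n r =
     fact n * fps_nth (fps_const (1 / fact r) * (dexp lam 1 - 1) ^ r * dexp lam (of_real x)) n"

definition FG_prefactor :: "int \<Rightarrow> real \<Rightarrow> complex \<Rightarrow> complex fps" where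
  "FG_prefactor k lam u =
     fps_const (1 - u) * (dEi k lam oo dlog1p lam) * inverse (dexp lam 1 - fps_const u)"

definition FGc :: "int \<Rightarrow> real \<Rightarrow> nat \<Rightarrow> real \<Rightarrow> real \<Rightarrow> complex \<Rightarrow> complex" where
  "FGc k lam n x y u =
     fact n * fps_nth (FG_prefactor k lam u * dexp lam (of_real x) * dcos lam y) n"

definition FGs :: "int \<Rightarrow> real \<Rightarrow> nat \<Rightarrow> real \<Rightarrow> real \<Rightarrow> complex \<Rightarrow> complex" where
  "FGs k lam n x y u =
     fact n * fps_nth (FG_prefactor k lam u * dexp lam (of_real x) * dsin lam y) n"

end

theory Submission
  imports Defs
begin

text \<open>
  The degenerate exponential e_lam^z(t) is the unique power series E with
  (1 + lam t) E'(t) = z E(t) and E(0) = 1. Since (1 + lam t) e_lam'(t) = e_lam(t), the series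
  (1 + (e_lam(t) - 1))^z solves the same equation, so e_lam^z(t) = sum_r (z)_r (e_lam(t) - 1)^r / r!
  and e_lam^(a+b) = e_lam^a e_lam^b. Comparing coefficients in e_lam^(x1+x2) = e_lam^x1 e_lam^x2
  gives (x1 + x2)_{m,lam} = sum_r S_{2,lam}^(x1)(m,r) (x2)_r, and the theorem is the binomial
  convolution of this identity with the coefficients of the remaining factor of the generating
  function. That factor is arbitrary.
\<close>

unbundle fps_syntax

lemma dfall_Suc: "dfall z lam (Suc n) = dfall z lam n * (z - of_nat n * complex_of_real lam)"
  by (simp add: dfall_def lessThan_Suc)

lemma dexp_nth: "dexp lam z $ n = dfall z lam n / fact n"
  by (simp add: dexp_def)

lemma dexp_nth_0: "dexp lam z $ 0 = 1"
  by (simp add: dexp_nth dfall_def)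

lemma fact_mult_dexp_nth: "fact n * dexp lam z $ n = dfall z lam n"
  by (simp add: dexp_nth)

lemma one_plus_const_X_mult_nth:
  "((1 + fps_const c * fps_X) * (F :: 'a::comm_ring_1 fps)) $ n
     = F $ n + (if n = 0 then 0 else c * F $ (n - 1))"
  by (simp add: distrib_right mult.assoc)

lemma dexp_ODE:
  "(1 + fps_const (complex_of_real lam) * fps_X) * fps_deriv (dexp lam z) = fps_const z * dexp lam z"
proof (rule fps_ext)
  fix n
  let ?c = "complex_of_real lam" and ?E = "dexp lam z"
  have fact_Suc': "fact (Suc m) = (of_nat (Suc m) :: complex) * fact m" for m
    by simp
  have recurrence: "of_nat (n + 1) * ?E $ (n + 1) = (z - of_nat n * ?c) * ?E $ n"
    unfolding dexp_nth by (simp add: dfall_Suc fact_Suc' field_simps del: of_nat_Suc fact_Suc)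
  have expand: "((1 + fps_const ?c * fps_X) * fps_deriv ?E) $ n
      = of_nat (n + 1) * ?E $ (n + 1) + ?c * of_nat n * ?E $ n"
    by (cases n) (simp_all add: one_plus_const_X_mult_nth del: of_nat_Suc)
  show "((1 + fps_const ?c * fps_X) * fps_deriv ?E) $ n = (fps_const z * ?E) $ n"
    unfolding expand recurrence by (simp add: algebra_simps)
qed

lemma dexp_ODE_unique:
  assumes ODE: "(1 + fps_const (complex_of_real lam) * fps_X) * fps_deriv F = fps_const z * F"
    and F0: "F $ 0 = 1"
  shows "F = dexp lam z"
proof -
  let ?c = "complex_of_real lam"
  have "F $ n = dfall z lam n / fact n" for n
  proof (induction n)
    case 0
    then show ?case using F0 by (simp add: dfall_def)
  next
    case (Suc n)
    have "((1 + fps_const ?c * fps_X) * fps_deriv F) $ n = (fps_const z * F) $ n"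
      using ODE by simp
    then have "of_nat (n + 1) * F $ (n + 1) + (if n = 0 then 0 else ?c * (of_nat n * F $ n))
        = z * F $ n"
      by (cases n) (simp_all add: one_plus_const_X_mult_nth)
    then have "F $ Suc n = (z - of_nat n * ?c) * F $ n / of_nat (Suc n)"
      by (cases "n = 0") (simp_all add: field_simps del: of_nat_Suc)
    then show ?case
      using Suc.IH by (simp add: dfall_Suc field_simps del: of_nat_Suc)
  qed
  then show ?thesis
    by (simp add: fps_eq_iff dexp_nth)
qed

lemma fps_binomial_ODE:
  "(1 + fps_X) * fps_deriv (fps_binomial c) = fps_const (c :: 'a::field_char_0) * fps_binomial c"
proof (rule fps_ext)
  fix n
  show "((1 + fps_X) * fps_deriv (fps_binomial c)) $ n = (fps_const c * fps_binomial c) $ n"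
    using gbinomial_mult_1[of c n] by (cases n) (simp_all add: algebra_simps)
qed

lemma dexp_eq_fps_binomial_compose: "dexp lam z = fps_binomial z oo (dexp lam 1 - 1)"
proof (rule dexp_ODE_unique[symmetric])
  let ?L = "1 + fps_const (complex_of_real lam) * fps_X"
    and ?G = "dexp lam 1 - 1" and ?B = "fps_binomial z"
  have G0: "?G $ 0 = 0"
    by (simp add: dexp_nth_0)
  have "?L * fps_deriv (?B oo ?G) = (fps_deriv ?B oo ?G) * (?L * fps_deriv ?G)"
    by (simp add: fps_compose_deriv[OF G0] algebra_simps)
  also have "?L * fps_deriv ?G = 1 + ?G"
    using dexp_ODE[of lam 1] by simp
  also have "(fps_deriv ?B oo ?G) * (1 + ?G) = ((1 + fps_X) * fps_deriv ?B) oo ?G"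
    by (simp add: fps_compose_mult_distrib[OF G0] fps_compose_add_distrib dexp_nth_0 mult.commute)
  also have "\<dots> = fps_const z * (?B oo ?G)"
    by (simp add: fps_binomial_ODE fps_compose_mult_distrib[OF G0])
  finally show "?L * fps_deriv (?B oo ?G) = fps_const z * (?B oo ?G)" .
  show "(?B oo ?G) $ 0 = 1"
    by simp
qed

lemma dexp_add: "dexp lam (a + b) = dexp lam a * dexp lam b"
proof -
  let ?G = "dexp lam 1 - 1"
  have G0: "?G $ 0 = 0"
    by (simp add: dexp_nth_0)
  have "dexp lam (a + b) = (fps_binomial a * fps_binomial b) oo ?G"
    by (subst dexp_eq_fps_binomial_compose) (simp add: fps_binomial_add_mult)
  also have "\<dots> = (fps_binomial a oo ?G) * (fps_binomial b oo ?G)"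
    by (rule fps_compose_mult_distrib[OF G0])
  finally show ?thesis
    by (simp flip: dexp_eq_fps_binomial_compose)
qed

lemma dexp_zero: "dexp lam 0 = 1"
  by (rule dexp_ODE_unique[symmetric]) simp_all

lemma fps_binomial_compose_mult_nth:
  fixes G E :: "'a::field_char_0 fps"
  assumes G0: "G $ 0 = 0"
  shows "((fps_binomial a oo G) * E) $ m = (\<Sum>r\<le>m. (a gchoose r) * (G ^ r * E) $ m)"
proof -
  have truncate: "(fps_binomial a oo G) $ i = (\<Sum>r\<le>m. (a gchoose r) * (G ^ r) $ i)" if "i \<le> m" for i
  proof -
    have "(fps_binomial a oo G) $ i = (\<Sum>r=0..i. (a gchoose r) * (G ^ r) $ i)"
      by (simp add: fps_compose_nth)
    also have "\<dots> = (\<Sum>r=0..m. (a gchoose r) * (G ^ r) $ i)"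
      by (rule sum.mono_neutral_left) (use that startsby_zero_power_prefix[OF G0] in auto)
    finally show ?thesis
      by (simp add: atLeast0AtMost)
  qed
  have "((fps_binomial a oo G) * E) $ m
      = (\<Sum>i=0..m. (\<Sum>r\<le>m. (a gchoose r) * (G ^ r) $ i) * E $ (m - i))"
    by (simp add: fps_mult_nth truncate)
  also have "\<dots> = (\<Sum>r\<le>m. (a gchoose r) * (\<Sum>i=0..m. (G ^ r) $ i * E $ (m - i)))"
    by (simp add: sum_distrib_left sum_distrib_right sum.swap[of _ "{0..m}"] mult.assoc)
  finally show ?thesis
    by (simp add: fps_mult_nth)
qed

lemma falling_fact_eq_fact_mult_gchoose:
  "complex_of_real (falling_fact x r) = fact r * (complex_of_real x gchoose r)"
  by (simp add: falling_fact_def gbinomial_prod_rev of_real_prod atLeast0LessThan)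

lemma dfall_add_eq_sum_dStirling2:
  "dfall (complex_of_real (x1 + x2)) lam m
     = (\<Sum>r\<le>m. dStirling2 lam x1 m r * complex_of_real (falling_fact x2 r))"
proof -
  let ?G = "dexp lam 1 - 1" and ?E = "dexp lam (complex_of_real x1)"
  have G0: "?G $ 0 = 0"
    by (simp add: dexp_nth_0)
  have "dfall (complex_of_real (x1 + x2)) lam m
      = fact m * ((fps_binomial (complex_of_real x2) oo ?G) * ?E) $ m"
    by (simp add: dexp_add mult.commute flip: fact_mult_dexp_nth dexp_eq_fps_binomial_compose)
  also have "\<dots> = fact m * (\<Sum>r\<le>m. (complex_of_real x2 gchoose r) * (?G ^ r * ?E) $ m)"
    by (simp only: fps_binomial_compose_mult_nth[OF G0])
  also have "\<dots> = (\<Sum>r\<le>m. dStirling2 lam x1 m r * complex_of_real (falling_fact x2 r))"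
    unfolding sum_distrib_left
    by (rule sum.cong) (simp_all add: dStirling2_def falling_fact_eq_fact_mult_gchoose mult.assoc)
  finally show ?thesis .
qed

lemma fact_mult_mult_nth_binomial_convolution:
  fixes A B :: "'a::{comm_semiring_1,semiring_char_0} fps"
  shows "fact n * (A * B) $ n
    = (\<Sum>m\<le>n. of_nat (n choose m) * (fact m * A $ m) * (fact (n - m) * B $ (n - m)))"
proof -
  have "fact n * (A * B) $ n = (\<Sum>m\<le>n. fact n * (A $ m * B $ (n - m)))"
    by (simp add: fps_mult_nth sum_distrib_left atLeast0AtMost)
  also have "\<dots> = (\<Sum>m\<le>n. of_nat (n choose m) * (fact m * A $ m) * (fact (n - m) * B $ (n - m)))"
  proof (rule sum.cong)
    fix m
    assume "m \<in> {..n}"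
    then have "(fact n :: 'a) = of_nat (n choose m) * fact m * fact (n - m)"
      using arg_cong[OF binomial_fact_lemma, of m n "of_nat :: nat \<Rightarrow> 'a"] by (simp add: mult_ac)
    then show "fact n * (A $ m * B $ (n - m))
        = of_nat (n choose m) * (fact m * A $ m) * (fact (n - m) * B $ (n - m))"
      by (simp add: mult_ac)
  qed simp
  finally show ?thesis .
qed

lemma fact_mult_dexp_mult_nth:
  "fact n * (dexp lam z * A) $ n
     = (\<Sum>m\<le>n. of_nat (n choose m) * dfall z lam m * (fact (n - m) * A $ (n - m)))"
  by (simp add: fact_mult_mult_nth_binomial_convolution fact_mult_dexp_nth)

lemma fact_mult_dexp_add_mult_nth:
  "fact n * (dexp lam (complex_of_real (x1 + x2)) * A) $ n
     = (\<Sum>m\<le>n. of_nat (n choose m) *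
         (\<Sum>r\<le>m. dStirling2 lam x1 m r * complex_of_real (falling_fact x2 r) *
            (fact (n - m) * A $ (n - m))))"
  by (simp add: fact_mult_dexp_mult_nth dfall_add_eq_sum_dStirling2
      sum_distrib_left sum_distrib_right mult.assoc del: of_real_add)

theorem theorem6:
  fixes lam :: real and k :: int and u :: complex and x1 x2 y :: real and n :: nat
  assumes "lam \<noteq> 0" and "u \<noteq> 1"
  shows "(FGc k lam n (x1 + x2) y u =
           (\<Sum>m\<le>n. of_nat (n choose m) *
              (\<Sum>r\<le>m. dStirling2 lam x1 m r * of_real (falling_fact x2 r) * FGc k lam (n - m) 0 y u))) \<and>
         (FGs k lam n (x1 + x2) y u =
           (\<Sum>m\<le>n. of_nat (n choose m) *
              (\<Sum>r\<le>m. dStirling2 lam x1 m r * of_real (falling_fact x2 r) * FGs k lam (n - m) 0 y u)))"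
proof -
  have reorder: "P * dexp lam x * T = dexp lam x * (P * T)" for P T x
    by (simp add: mult_ac)
  show ?thesis
    unfolding FGc_def FGs_def reorder
    by (simp add: fact_mult_dexp_add_mult_nth dexp_zero del: of_real_add)
qed

end
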